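(* A formula $\varphi\in\mathcal{L}$ is derivable in $\mathsf{ConstCKID}$ (resp. $\mathsf{ConstCKMP}$, resp. $\mathsf{ConstCKMPID}$) if and only if it is valid in all constructive Chellas models satisfying property (id) (resp. property (mp), resp. both (id) and (mp)), where (id): for all $X\subseteq W$ and $w,v\in W$, if $wR_Xv$ then $v\in X$; (mp): for all $X\subseteq W$ and $w\in W$, if $w\in X$ then $wR_Xw$.
   Context: Language $\mathcal{L}$: formulas $\varphi ::= p \mid \bot \mid \varphi\wedge\varphi \mid \varphi\vee\varphi \mid \varphi\to\varphi \mid \varphi \mathrel{\Box\!\!\to} \varphi \mid \varphi \mathrel{\Diamond\!\!\to}\varphi$; $\neg\varphi:=\varphi\to\bot$, $\top:=\neg\bot$, $\varphi\leftrightarrow\psi:=(\varphi\to\psi)\wedge(\psi\to\varphi)$. $\mathsf{ConstCK}$: any axiomatisation of intuitionistic propositional logic in $\mathcal{L}$ with modus ponens, plus CM$_\Box$: $(\varphi\mathrel{\Box\!\!\to}\psi\wedge\chi)\to(\varphi\mathrel{\Box\!\!\to}\psi)\wedge(\varphi\mathrel{\Box\!\!\to}\chi)$; CC$_\Box$: $(\varphi\mathrel{\Box\!\!\to}\psi)\wedge(\varphi\mathrel{\Box\!\!\to}\chi)\to(\varphi\mathrel{\Box\!\!\to}\psi\wedge\chi)$; CN$_\Box$: $\varphi\mathrel{\Box\!\!\to}\top$; CN$_\Diamond$: $\neg(\varphi\mathrel{\Diamond\!\!\to}\bot)$; CK$_\Diamond$: $(\varphi\mathrel{\Box\!\!\to}(\psi\to\chi))\to((\varphi\mathrel{\Diamond\!\!\to}\psi)\to(\varphi\mathrel{\Diamond\!\!\to}\chi))$;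 rules RA$_\Box$: from $\varphi\leftrightarrow\rho$ infer $(\varphi\mathrel{\Box\!\!\to}\psi)\leftrightarrow(\rho\mathrel{\Box\!\!\to}\psi)$; RC$_\Box$: from $\psi\leftrightarrow\chi$ infer $(\varphi\mathrel{\Box\!\!\to}\psi)\leftrightarrow(\varphi\mathrel{\Box\!\!\to}\chi)$; RA$_\Diamond$, RC$_\Diamond$: the same with $\mathrel{\Diamond\!\!\to}$. $\mathsf{ConstCKID}$ = $\mathsf{ConstCK}$ + ID$_\Box$: $\varphi\mathrel{\Box\!\!\to}\varphi$. $\mathsf{ConstCKMP}$ = $\mathsf{ConstCK}$ + MP$_\Box$: $(\varphi\mathrel{\Box\!\!\to}\psi)\to(\varphi\to\psi)$ + MP$_\Diamond$: $\varphi\wedge\psi\to(\varphi\mathrel{\Diamond\!\!\to}\psi)$. $\mathsf{ConstCKMPID}$ = $\mathsf{ConstCK}$ + MP$_\Box$, MP$_\Diamond$, ID$_\Box$. A constructive Chellas model is $M=\langle W,\le,R,V\rangle$ with $W$ nonempty, $\le$ reflexive and transitive on $W$, $V:W\to2^{Atm}$ monotone ($w\le w'$ implies $V(w)\subseteq V(w')$), and $R$ associating to each $X\subseteq W$ a binary relation $R_X$ on $W$. Satisfaction: $w\Vdash p$ iff $p\in V(w)$; $w\not\Vdash\bot$; $\wedge,\vee$ pointwise; $w\Vdash\varphi\to\psi$ iff for all $w'\ge w$, $w'\Vdash\varphi$ implies $w'\Vdash\psi$; with $[\varphi]=\{w\mid w\Vdash\varphi\}$: $w\Vdash\varphi\mathrel{\Box\!\!\to}\psi$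 iff for all $w',v$ with $w\le w'$ and $w'R_{[\varphi]}v$, $v\Vdash\psi$; $w\Vdash\varphi\mathrel{\Diamond\!\!\to}\psi$ iff for all $w'\ge w$ there is $v$ with $w'R_{[\varphi]}v$ and $v\Vdash\psi$. A formula is valid in $M$ if satisfied at every world. *)

theory Defs
  imports Main
begin

datatype form =
    Atom nat
  | Bot
  | And form form
  | Or form form
  | Imp form form
  | Box form form
  | Dia form form

definition Neg :: "form \<Rightarrow> form" where "Neg a = Imp a Bot"
definition Top :: form where "Top = Neg Bot"
definition Iff :: "form \<Rightarrow> form \<Rightarrow> form" where "Iff a b = And (Imp a b) (Imp b a)"

inductive derivable :: "form set \<Rightarrow> form \<Rightarrow> bool" for E :: "form set" where
  ax_extra: "a \<in> E \<Longrightarrow> derivable E a"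
| ipc1: "derivable E (Imp a (Imp b a))"
| ipc2: "derivable E (Imp (Imp a (Imp b c)) (Imp (Imp a b) (Imp a c)))"
| ipc3: "derivable E (Imp (And a b) a)"
| ipc4: "derivable E (Imp (And a b) b)"
| ipc5: "derivable E (Imp a (Imp b (And a b)))"
| ipc6: "derivable E (Imp a (Or a b))"
| ipc7: "derivable E (Imp b (Or a b))"
| ipc8: "derivable E (Imp (Imp a c) (Imp (Imp b c) (Imp (Or a b) c)))"
| ipc9: "derivable E (Imp Bot a)"
| mp: "derivable E (Imp a b) \<Longrightarrow> derivable E a \<Longrightarrow> derivable E b"
| CM_box: "derivable E (Imp (Box a (And b c)) (And (Box a b) (Box a c)))"
| CC_box: "derivable E (Imp (And (Box a b) (Box a c)) (Box a (And b c)))"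
| CN_box: "derivable E (Box a Top)"
| CN_dia: "derivable E (Neg (Dia a Bot))"
| CK_dia: "derivable E (Imp (Box a (Imp b c)) (Imp (Dia a b) (Dia a c)))"
| RA_box: "derivable E (Iff a r) \<Longrightarrow> derivable E (Iff (Box a b) (Box r b))"
| RC_box: "derivable E (Iff b c) \<Longrightarrow> derivable E (Iff (Box a b) (Box a c))"
| RA_dia: "derivable E (Iff a r) \<Longrightarrow> derivable E (Iff (Dia a b) (Dia r b))"
| RC_dia: "derivable E (Iff b c) \<Longrightarrow> derivable E (Iff (Dia a b) (Dia a c))"

definition ID_ax :: "form set" where
  "ID_ax = {Box a a | a. True}"

definition MP_ax :: "form set" where
  "MP_ax = {Imp (Box a b) (Imp a b) | a b. True} \<union> {Imp (And a b) (Dia a b) | a b. True}"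

abbreviation ConstCKID :: "form \<Rightarrow> bool" where "ConstCKID \<equiv> derivable ID_ax"
abbreviation ConstCKMP :: "form \<Rightarrow> bool" where "ConstCKMP \<equiv> derivable MP_ax"
abbreviation ConstCKMPID :: "form \<Rightarrow> bool" where "ConstCKMPID \<equiv> derivable (MP_ax \<union> ID_ax)"

text \<open>Only the values of le, R X on W
(and X \<subseteq> W) matter.\<close>

definition chellas_model ::
  "'w set \<Rightarrow> ('w \<Rightarrow> 'w \<Rightarrow> bool) \<Rightarrow> ('w \<Rightarrow> nat set) \<Rightarrow> bool" where
  "chellas_model W le V \<longleftrightarrow>
     W \<noteq> {} \<and>
     (\<forall>w\<in>W. le w w) \<and>
     (\<forall>u\<in>W. \<forall>v\<in>W. \<forall>w\<in>W. le u v \<longrightarrow> le v w \<longrightarrow> le u w) \<and>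
     (\<forall>w\<in>W. \<forall>w'\<in>W. le w w' \<longrightarrow> V w \<subseteq> V w')"

fun sat :: "'w set \<Rightarrow> ('w \<Rightarrow> 'w \<Rightarrow> bool) \<Rightarrow> ('w set \<Rightarrow> 'w \<Rightarrow> 'w \<Rightarrow> bool)
            \<Rightarrow> ('w \<Rightarrow> nat set) \<Rightarrow> 'w \<Rightarrow> form \<Rightarrow> bool" where
  "sat W le R V w (Atom p) = (p \<in> V w)"
| "sat W le R V w Bot = False"
| "sat W le R V w (And a b) = (sat W le R V w a \<and> sat W le R V w b)"
| "sat W le R V w (Or a b) = (sat W le R V w a \<or> sat W le R V w b)"
| "sat W le R V w (Imp a b) =
     (\<forall>w'\<in>W. le w w' \<longrightarrow> sat W le R V w' a \<longrightarrow> sat W le R V w' b)"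
| "sat W le R V w (Box a b) =
     (\<forall>w'\<in>W. \<forall>v\<in>W. le w w' \<longrightarrow> R {u\<in>W. sat W le R V u a} w' v \<longrightarrow> sat W le R V v b)"
| "sat W le R V w (Dia a b) =
     (\<forall>w'\<in>W. le w w' \<longrightarrow> (\<exists>v\<in>W. R {u\<in>W. sat W le R V u a} w' v \<and> sat W le R V v b))"

definition valid_in ::
  "'w set \<Rightarrow> ('w \<Rightarrow> 'w \<Rightarrow> bool) \<Rightarrow> ('w set \<Rightarrow> 'w \<Rightarrow> 'w \<Rightarrow> bool)
   \<Rightarrow> ('w \<Rightarrow> nat set) \<Rightarrow> form \<Rightarrow> bool" where
  "valid_in W le R V a \<longleftrightarrow> (\<forall>w\<in>W. sat W le R V w a)"

definition prop_id :: "'w set \<Rightarrow> ('w set \<Rightarrow> 'w \<Rightarrow> 'w \<Rightarrow> bool) \<Rightarrow> bool" where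
  "prop_id W R \<longleftrightarrow> (\<forall>X. X \<subseteq> W \<longrightarrow> (\<forall>w\<in>W. \<forall>v\<in>W. R X w v \<longrightarrow> v \<in> X))"

definition prop_mp :: "'w set \<Rightarrow> ('w set \<Rightarrow> 'w \<Rightarrow> 'w \<Rightarrow> bool) \<Rightarrow> bool" where
  "prop_mp W R \<longleftrightarrow> (\<forall>X. X \<subseteq> W \<longrightarrow> (\<forall>w\<in>W. w \<in> X \<longrightarrow> R X w w))"

definition valid_class ::
  "'w itself \<Rightarrow> ('w set \<Rightarrow> ('w set \<Rightarrow> 'w \<Rightarrow> 'w \<Rightarrow> bool) \<Rightarrow> bool) \<Rightarrow> form \<Rightarrow> bool" where
  "valid_class T P a \<longleftrightarrow>
     (\<forall>(W::'w set) le R V. chellas_model W le V \<and> P W R \<longrightarrow> valid_in W le R V a)"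

end

theory Submission
  imports Defs
begin

(* Completeness uses a canonical model whose worlds are pairs (D, t) of a prime theory D and a
   tag formula t, ordered by inclusion of the theories. For a truth set [a], (D, t) sees (D', t')
   iff D' contains every b with (a box-arrow b) in D and, unless (a diamond-arrow t) is in D,
   D' omits t. The tag is what refutes a diamond-arrow: if (a diamond-arrow b) is not in D, the
   world (D, b) has no successor containing b. The box case rests on {b. a box-arrow b in D}
   being closed under derivation (CN, CC, CM, RC), the diamond case on CK and CN_dia. On sets
   that are not truth sets R is the identity restricted to the set, which has both (id) and (mp),
   while ID and MP give these properties on truth sets. Since the statement fixes the world type
   form set set, the canonical model is finally copied into that type along an injection. *)

lemma chellas_model_refl: "chellas_model W le V \<Longrightarrow> w \<in> W \<Longrightarrow> le w w"
  unfolding chellas_model_def by blast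

lemma chellas_model_trans:
  "chellas_model W le V \<Longrightarrow> u \<in> W \<Longrightarrow> v \<in> W \<Longrightarrow> w \<in> W \<Longrightarrow> le u v \<Longrightarrow> le v w \<Longrightarrow> le u w"
  unfolding chellas_model_def by blast

lemma chellas_model_mono: "chellas_model W le V \<Longrightarrow> u \<in> W \<Longrightarrow> v \<in> W \<Longrightarrow> le u v \<Longrightarrow> V u \<subseteq> V v"
  unfolding chellas_model_def by blast

lemma sat_persistent:
  assumes "chellas_model W le V" "w \<in> W" "w' \<in> W" "le w w'" "sat W le R V w a"
  shows "sat W le R V w' a"
  using assms(2-)
  by (induction a arbitrary: w w')
     (auto dest: chellas_model_mono[OF assms(1)] intro: chellas_model_trans[OF assms(1)])

lemma valid_Imp_iff:
  assumes "chellas_model W le V"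
  shows "valid_in W le R V (Imp a b) \<longleftrightarrow> (\<forall>w\<in>W. sat W le R V w a \<longrightarrow> sat W le R V w b)"
  using chellas_model_refl[OF assms] unfolding valid_in_def by auto

lemma valid_Iff_iff:
  assumes "chellas_model W le V"
  shows "valid_in W le R V (Iff a b) \<longleftrightarrow> (\<forall>w\<in>W. sat W le R V w a \<longleftrightarrow> sat W le R V w b)"
  using chellas_model_refl[OF assms] unfolding valid_in_def Iff_def by auto

lemma valid_derivable:
  assumes m: "chellas_model W le V" and E: "\<forall>e\<in>E. valid_in W le R V e"
  shows "derivable E a \<Longrightarrow> valid_in W le R V a"
proof (induction rule: derivable.induct)
  case (ax_extra a)
  then show ?case using E by blast
next
  case (ipc1 a b)
  show ?case by (auto simp: valid_Imp_iff[OF m] intro: sat_persistent[OF m])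
next
  case (ipc2 a b c)
  show ?case
    by (clarsimp simp: valid_Imp_iff[OF m])
       (metis chellas_model_trans[OF m] chellas_model_refl[OF m])
next
  case (ipc5 a b)
  show ?case by (auto simp: valid_Imp_iff[OF m] intro: sat_persistent[OF m])
next
  case (ipc8 a c b)
  show ?case by (clarsimp simp: valid_Imp_iff[OF m]) (metis chellas_model_trans[OF m])
next
  case (mp a b)
  then show ?case using chellas_model_refl[OF m] by (auto simp: valid_in_def)
next
  case (CN_box a)
  show ?case by (simp add: valid_in_def Top_def Neg_def)
next
  case (CN_dia a)
  show ?case by (auto simp: valid_in_def Neg_def dest: chellas_model_refl[OF m])
next
  case (CK_dia a b c)
  let ?A = "{u\<in>W. sat W le R V u a}"
  have "sat W le R V w (Imp (Dia a b) (Dia a c))"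
    if "w \<in> W" and box: "sat W le R V w (Box a (Imp b c))" for w
  proof (unfold sat.simps, intro ballI impI)
    fix w1 w2
    assume "w1 \<in> W" "le w w1" "w2 \<in> W" "le w1 w2"
      and "\<forall>w'\<in>W. le w1 w' \<longrightarrow> (\<exists>v\<in>W. R ?A w' v \<and> sat W le R V v b)"
    then obtain v where v: "v \<in> W" "R ?A w2 v" "sat W le R V v b" by blast
    have "le w w2"
      using chellas_model_trans[OF m] \<open>w \<in> W\<close> \<open>w1 \<in> W\<close> \<open>w2 \<in> W\<close> \<open>le w w1\<close> \<open>le w1 w2\<close> .
    then have "sat W le R V v c"
      using box v \<open>w2 \<in> W\<close> chellas_model_refl[OF m, of v] by auto
    with v show "\<exists>v\<in>W. R ?A w2 v \<and> sat W le R V v c" by blast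
  qed
  then show ?case by (simp only: valid_Imp_iff[OF m]) blast
next
  case (RA_box a r b)
  then have "{u\<in>W. sat W le R V u a} = {u\<in>W. sat W le R V u r}"
    by (auto simp: valid_Iff_iff[OF m])
  then show ?case by (simp add: valid_Iff_iff[OF m])
next
  case (RA_dia a r b)
  then have "{u\<in>W. sat W le R V u a} = {u\<in>W. sat W le R V u r}"
    by (auto simp: valid_Iff_iff[OF m])
  then show ?case by (simp add: valid_Iff_iff[OF m])
qed (simp_all add: valid_Imp_iff[OF m] valid_Iff_iff[OF m])

lemma valid_ID_ax:
  assumes "prop_id W R" and "e \<in> ID_ax"
  shows "valid_in W le R V e"
proof -
  have "sat W le R V w (Box a a)" for w a
  proof (unfold sat.simps, intro ballI impI)
    fix w' v assume "v \<in> W" "R {u\<in>W. sat W le R V u a} w' v" "w' \<in> W"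
    moreover have "{u\<in>W. sat W le R V u a} \<subseteq> W" by blast
    ultimately have "v \<in> {u\<in>W. sat W le R V u a}"
      using \<open>prop_id W R\<close> unfolding prop_id_def by blast
    then show "sat W le R V v a" by blast
  qed
  then show ?thesis
    using \<open>e \<in> ID_ax\<close> unfolding ID_ax_def valid_in_def by blast
qed

lemma valid_MP_ax:
  assumes m: "chellas_model W le V" and "prop_mp W R" and "e \<in> MP_ax"
  shows "valid_in W le R V e"
proof -
  have R_refl: "R {u\<in>W. sat W le R V u a} w w" if "w \<in> W" "sat W le R V w a" for w a
  proof -
    have "{u\<in>W. sat W le R V u a} \<subseteq> W" by blast
    with \<open>prop_mp W R\<close> that show ?thesis unfolding prop_mp_def by blast
  qed
  have "sat W le R V w (Imp a b)" if "sat W le R V w (Box a b)" for w a b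
  proof (unfold sat.simps, intro ballI impI)
    fix w' assume "w' \<in> W" "le w w'" "sat W le R V w' a"
    with that R_refl[of w' a] show "sat W le R V w' b" by simp
  qed
  moreover have "sat W le R V w (Dia a b)"
    if "w \<in> W" "sat W le R V w a" "sat W le R V w b" for w a b
  proof (unfold sat.simps, intro ballI impI)
    fix w' assume "w' \<in> W" "le w w'"
    then have "sat W le R V w' a" "sat W le R V w' b"
      using that sat_persistent[OF m] by blast+
    with \<open>w' \<in> W\<close> R_refl[of w' a]
    show "\<exists>v\<in>W. R {u\<in>W. sat W le R V u a} w' v \<and> sat W le R V v b" by blast
  qed
  ultimately show ?thesis
    using \<open>e \<in> MP_ax\<close> unfolding MP_ax_def by (auto simp: valid_Imp_iff[OF m])
qed

lemma valid_class_derivable: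
  assumes "derivable E a"
    and E: "\<And>(W::'w set) le R V e.
      chellas_model W le V \<Longrightarrow> P W R \<Longrightarrow> e \<in> E \<Longrightarrow> valid_in W le R V e"
  shows "valid_class TYPE('w) P a"
  unfolding valid_class_def
proof (intro allI impI)
  fix W :: "'w set" and le R V
  assume "chellas_model W le V \<and> P W R"
  then have m: "chellas_model W le V" and "P W R" by auto
  show "valid_in W le R V a"
    using valid_derivable[OF m _ \<open>derivable E a\<close>] E[OF m \<open>P W R\<close>] by blast
qed

inductive derivable_from :: "form set \<Rightarrow> form set \<Rightarrow> form \<Rightarrow> bool" for E G where
  hyp: "a \<in> G \<Longrightarrow> derivable_from E G a"
| derivable: "derivable E a \<Longrightarrow> derivable_from E G a"
| mp: "derivable_from E G (Imp a b) \<Longrightarrow> derivable_from E G a \<Longrightarrow> derivable_from E G b"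

lemma derivable_Imp_self: "derivable E (Imp a a)"
  using derivable.mp[OF derivable.mp[OF derivable.ipc2[of E a "Imp a a" a] derivable.ipc1]]
    derivable.ipc1 .

lemma derivable_Iff_intro:
  "derivable E (Imp a b) \<Longrightarrow> derivable E (Imp b a) \<Longrightarrow> derivable E (Iff a b)"
  unfolding Iff_def using derivable.mp derivable.ipc5 by metis

lemma derivable_from_mono: "derivable_from E G a \<Longrightarrow> G \<subseteq> H \<Longrightarrow> derivable_from E H a"
  by (induction rule: derivable_from.induct) (auto intro: derivable_from.intros)

lemma derivable_from_empty_iff: "derivable_from E {} a \<longleftrightarrow> derivable E a"
proof
  show "derivable_from E {} a \<Longrightarrow> derivable E a"
    by (induction rule: derivable_from.induct) (auto intro: derivable.mp)
qed (rule derivable_from.derivable)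

lemma derivable_from_deduction:
  "derivable_from E (insert a G) b \<Longrightarrow> derivable_from E G (Imp a b)"
proof (induction rule: derivable_from.induct)
  case (hyp b)
  then show ?case
    using derivable_Imp_self derivable_from.derivable
      derivable_from.mp[OF derivable_from.derivable[OF derivable.ipc1] derivable_from.hyp]
    by blast
next
  case (derivable b)
  then show ?case
    using derivable_from.mp[OF derivable_from.derivable[OF derivable.ipc1] derivable_from.derivable] by blast
next
  case (mp b c)
  then show ?case
    using derivable_from.mp[OF derivable_from.mp[OF derivable_from.derivable[OF derivable.ipc2]]] by blast
qed

lemma derivable_Imp_of_derivable_from_singleton:
  "derivable_from E {a} b \<Longrightarrow> derivable E (Imp a b)"
  using derivable_from_deduction derivable_from_empty_iff by blast

lemma derivable_from_finite_subset:
  "derivable_from E G a \<Longrightarrow> \<exists>G0\<subseteq>G. finite G0 \<and> derivable_from E G0 a"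
proof (induction rule: derivable_from.induct)
  case (hyp a)
  then show ?case by (intro exI[of _ "{a}"]) (auto intro: derivable_from.hyp)
next
  case (derivable a)
  then show ?case by (intro exI[of _ "{}"]) (auto intro: derivable_from.derivable)
next
  case (mp a b)
  then obtain G1 G2 where "G1 \<subseteq> G" "finite G1" "derivable_from E G1 (Imp a b)"
    and "G2 \<subseteq> G" "finite G2" "derivable_from E G2 a" by blast
  then show ?case
    by (intro exI[of _ "G1 \<union> G2"]) (auto intro: derivable_from.mp derivable_from_mono)
qed

definition prime_theory :: "form set \<Rightarrow> form set \<Rightarrow> bool" where
  "prime_theory E D \<longleftrightarrow>
     (\<forall>a. derivable_from E D a \<longrightarrow> a \<in> D) \<and> Bot \<notin> D \<and>
     (\<forall>a b. Or a b \<in> D \<longrightarrow> a \<in> D \<or> b \<in> D)"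

lemma maximal_not_derivable_from:
  assumes "\<not> derivable_from E G c"
  obtains M where "G \<subseteq> M" "\<not> derivable_from E M c"
    "\<And>a. a \<notin> M \<Longrightarrow> derivable_from E (insert a M) c"
proof -
  let ?A = "{D. G \<subseteq> D \<and> \<not> derivable_from E D c}"
  have "\<exists>M\<in>?A. \<forall>X\<in>?A. M \<subseteq> X \<longrightarrow> X = M"
  proof (rule subset_Zorn_nonempty)
    have "G \<in> ?A" using assms by simp
    then show "?A \<noteq> {}" by auto
  next
    fix C assume "C \<noteq> {}" and chain: "subset.chain ?A C"
    then have CA: "C \<subseteq> ?A" unfolding subset.chain_def by (simp only:)
    obtain X where "X \<in> C" using \<open>C \<noteq> {}\<close> by auto
    then have "G \<subseteq> \<Union>C" using CA by auto
    moreover have "\<not> derivable_from E (\<Union>C) c"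
    proof
      assume "derivable_from E (\<Union>C) c"
      then obtain G0 where G0: "G0 \<subseteq> \<Union>C" "finite G0" "derivable_from E G0 c"
        by (blast dest: derivable_from_finite_subset)
      obtain B where "B \<in> C" "G0 \<subseteq> B"
        using finite_subset_Union_chain[OF G0(2,1) \<open>C \<noteq> {}\<close> chain] .
      then have "\<not> derivable_from E B c" using CA by blast
      with derivable_from_mono[OF G0(3) \<open>G0 \<subseteq> B\<close>] show False by contradiction
    qed
    ultimately show "\<Union>C \<in> ?A" by simp
  qed
  then obtain M where "M \<in> ?A" and max: "\<forall>X\<in>?A. M \<subseteq> X \<longrightarrow> X = M" ..
  then have M: "G \<subseteq> M" "\<not> derivable_from E M c" by simp_all
  have "derivable_from E (insert a M) c" if "a \<notin> M" for a
  proof (rule ccontr)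
    assume "\<not> derivable_from E (insert a M) c"
    with M(1) have "insert a M \<in> ?A" by blast
    with max have "insert a M = M" by blast
    with that show False by blast
  qed
  with M show ?thesis using that by blast
qed

lemma prime_theory_extension:
  assumes "\<not> derivable_from E G c"
  obtains D where "G \<subseteq> D" "prime_theory E D" "c \<notin> D"
proof -
  obtain M where "G \<subseteq> M" and M: "\<not> derivable_from E M c"
    and max: "\<And>a. a \<notin> M \<Longrightarrow> derivable_from E (insert a M) c"
    using maximal_not_derivable_from[OF assms] by blast
  have Imp_c: "derivable_from E M (Imp a c)" if "a \<notin> M" for a
    using derivable_from_deduction[OF max[OF that]] .
  have "a \<in> M" if "derivable_from E M a" for a
  proof (rule ccontr)
    assume "a \<notin> M"
    with that have "derivable_from E M c" using Imp_c derivable_from.mp by blast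
    with M show False ..
  qed
  moreover have "Bot \<notin> M"
  proof
    assume "Bot \<in> M"
    then have "derivable_from E M c"
      by (rule derivable_from.mp[OF derivable_from.derivable[OF derivable.ipc9] derivable_from.hyp])
    with M show False ..
  qed
  moreover have "a \<in> M \<or> b \<in> M" if "Or a b \<in> M" for a b
  proof (rule ccontr)
    assume "\<not> (a \<in> M \<or> b \<in> M)"
    then have "derivable_from E M (Imp a c)" "derivable_from E M (Imp b c)"
      using Imp_c by auto
    then have "derivable_from E M c"
      using derivable_from.mp[OF derivable_from.mp[OF derivable_from.mp[OF
          derivable_from.derivable[OF derivable.ipc8]]] derivable_from.hyp[OF that]]
      by blast
    with M show False ..
  qed
  ultimately have "prime_theory E M" unfolding prime_theory_def by blast
  with \<open>G \<subseteq> M\<close> M derivable_from.hyp that show ?thesis by blast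
qed

lemma prime_theory_derivable_from_mem: "prime_theory E D \<Longrightarrow> derivable_from E D a \<Longrightarrow> a \<in> D"
  unfolding prime_theory_def by blast

lemma prime_theory_derivable_mem: "prime_theory E D \<Longrightarrow> derivable E a \<Longrightarrow> a \<in> D"
  using prime_theory_derivable_from_mem derivable_from.derivable by blast

lemma prime_theory_mp:
  assumes "prime_theory E D" "Imp a b \<in> D" "a \<in> D"
  shows "b \<in> D"
  using assms(1) derivable_from.mp[OF derivable_from.hyp[OF assms(2)] derivable_from.hyp[OF assms(3)]]
  by (rule prime_theory_derivable_from_mem)

lemma prime_theory_Bot: "prime_theory E D \<Longrightarrow> Bot \<notin> D"
  unfolding prime_theory_def by blast

lemma prime_theory_And_iff:
  assumes D: "prime_theory E D"
  shows "And a b \<in> D \<longleftrightarrow> a \<in> D \<and> b \<in> D"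
  using prime_theory_mp[OF D prime_theory_derivable_mem[OF D derivable.ipc3]]
    prime_theory_mp[OF D prime_theory_derivable_mem[OF D derivable.ipc4]]
    prime_theory_mp[OF D prime_theory_mp[OF D prime_theory_derivable_mem[OF D derivable.ipc5]]]
  by blast

lemma prime_theory_Or_iff:
  assumes D: "prime_theory E D"
  shows "Or a b \<in> D \<longleftrightarrow> a \<in> D \<or> b \<in> D"
  using D prime_theory_mp[OF D prime_theory_derivable_mem[OF D derivable.ipc6]]
    prime_theory_mp[OF D prime_theory_derivable_mem[OF D derivable.ipc7]]
  unfolding prime_theory_def by blast

lemma prime_theory_Iff:
  assumes D: "prime_theory E D" and "derivable E (Iff a b)"
  shows "a \<in> D \<longleftrightarrow> b \<in> D"
  using prime_theory_derivable_mem[OF D \<open>derivable E (Iff a b)\<close>]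
    prime_theory_And_iff[OF D] prime_theory_mp[OF D]
  unfolding Iff_def by blast

lemma prime_theory_Box_mono:
  assumes D: "prime_theory E D" and "derivable E (Imp b c)" and "Box a b \<in> D"
  shows "Box a c \<in> D"
proof -
  have "derivable_from E {b} (And b c)"
    using derivable_from.mp[OF derivable_from.mp[OF derivable_from.derivable[OF derivable.ipc5]]
        derivable_from.mp[OF derivable_from.derivable[OF \<open>derivable E (Imp b c)\<close>]]]
      derivable_from.hyp
    by blast
  then have "derivable E (Iff b (And b c))"
    using derivable_Iff_intro derivable_Imp_of_derivable_from_singleton derivable.ipc3 by blast
  then have "Box a (And b c) \<in> D"
    using prime_theory_Iff[OF D derivable.RC_box] \<open>Box a b \<in> D\<close> by blast
  then show ?thesis
    using prime_theory_mp[OF D prime_theory_derivable_mem[OF D derivable.CM_box]]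
      prime_theory_And_iff[OF D] by blast
qed

lemma prime_theory_Box_closed:
  assumes D: "prime_theory E D"
  shows "derivable_from E {b. Box a b \<in> D} c \<Longrightarrow> Box a c \<in> D"
proof (induction rule: derivable_from.induct)
  case (hyp c)
  then show ?case by blast
next
  case (derivable c)
  then have "derivable E (Imp Top c)" using derivable.mp derivable.ipc1 by blast
  then show ?case
    using prime_theory_Box_mono[OF D _ prime_theory_derivable_mem[OF D derivable.CN_box]] by blast
next
  case (mp c d)
  then have "Box a (And (Imp c d) c) \<in> D"
    using prime_theory_mp[OF D prime_theory_derivable_mem[OF D derivable.CC_box]]
      prime_theory_And_iff[OF D] by blast
  moreover have "derivable_from E {And (Imp c d) c} d"
    using derivable_from.mp[OF derivable_from.mp[OF derivable_from.derivable[OF derivable.ipc3]]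
        derivable_from.mp[OF derivable_from.derivable[OF derivable.ipc4]]] derivable_from.hyp
    by blast
  ultimately show ?case
    using prime_theory_Box_mono[OF D] derivable_Imp_of_derivable_from_singleton by blast
qed

definition canon_W :: "form set \<Rightarrow> (form set \<times> form) set" where
  "canon_W E = {x. prime_theory E (fst x)}"

definition canon_le :: "form set \<times> form \<Rightarrow> form set \<times> form \<Rightarrow> bool" where
  "canon_le x y \<longleftrightarrow> fst x \<subseteq> fst y"

definition canon_V :: "form set \<times> form \<Rightarrow> nat set" where
  "canon_V x = {p. Atom p \<in> fst x}"

definition truth_set :: "form set \<Rightarrow> form \<Rightarrow> (form set \<times> form) set" where
  "truth_set E a = {x \<in> canon_W E. a \<in> fst x}"

definition canon_access :: "form \<Rightarrow> form set \<times> form \<Rightarrow> form set \<times> form \<Rightarrow> bool" where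
  "canon_access a x y \<longleftrightarrow>
     (\<forall>b. Box a b \<in> fst x \<longrightarrow> b \<in> fst y) \<and> (Dia a (snd x) \<notin> fst x \<longrightarrow> snd x \<notin> fst y)"

definition canon_R ::
  "form set \<Rightarrow> (form set \<times> form) set \<Rightarrow> form set \<times> form \<Rightarrow> form set \<times> form \<Rightarrow> bool" where
  "canon_R E X x y \<longleftrightarrow>
     (\<exists>a. X = truth_set E a \<and> canon_access a x y) \<or> ((\<forall>a. X \<noteq> truth_set E a) \<and> x = y \<and> x \<in> X)"

lemma prime_theory_Imp_witness:
  assumes D: "prime_theory E D" and "Imp a b \<notin> D"
  obtains D' where "D \<subseteq> D'" "prime_theory E D'" "a \<in> D'" "b \<notin> D'"
proof -
  have "\<not> derivable_from E (insert a D) b"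
  proof
    assume "derivable_from E (insert a D) b"
    then have "Imp a b \<in> D"
      by (rule prime_theory_derivable_from_mem[OF D derivable_from_deduction])
    with \<open>Imp a b \<notin> D\<close> show False ..
  qed
  then obtain D' where "insert a D \<subseteq> D'" "prime_theory E D'" "b \<notin> D'"
    by (rule prime_theory_extension)
  then show ?thesis by (intro that) auto
qed

lemma prime_theory_Box_witness:
  assumes D: "prime_theory E D" and "Box a b \<notin> D"
  obtains D' where "{c. Box a c \<in> D} \<subseteq> D'" "prime_theory E D'" "b \<notin> D'"
proof -
  have "\<not> derivable_from E {c. Box a c \<in> D} b"
    using prime_theory_Box_closed[OF D] \<open>Box a b \<notin> D\<close> by blast
  then show ?thesis by (rule prime_theory_extension) (rule that)
qed

lemma prime_theory_Dia_witness:
  assumes D: "prime_theory E D" and "Dia a b \<in> D"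
  obtains D' where "{c. Box a c \<in> D} \<subseteq> D'" "prime_theory E D'" "b \<in> D'"
    "Dia a t \<notin> D \<longrightarrow> t \<notin> D'"
proof -
  \<comment> \<open>If (a diamond-arrow t) is in D there is nothing to avoid; Bot is avoided by CN_dia.\<close>
  define \<tau> where "\<tau> = (if Dia a t \<in> D then Bot else t)"
  have "\<not> derivable_from E (insert b {c. Box a c \<in> D}) \<tau>"
  proof
    assume "derivable_from E (insert b {c. Box a c \<in> D}) \<tau>"
    then have "Box a (Imp b \<tau>) \<in> D"
      using prime_theory_Box_closed[OF D] derivable_from_deduction by blast
    then have "Dia a \<tau> \<in> D"
      using prime_theory_mp[OF D prime_theory_mp[OF D prime_theory_derivable_mem[OF D derivable.CK_dia]]]
        \<open>Dia a b \<in> D\<close> by blast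
    moreover have "Dia a Bot \<notin> D"
      using prime_theory_mp[OF D prime_theory_derivable_mem[OF D derivable.CN_dia[unfolded Neg_def]]]
        prime_theory_Bot[OF D] by blast
    ultimately show False unfolding \<tau>_def by (auto split: if_splits)
  qed
  then obtain D' where "insert b {c. Box a c \<in> D} \<subseteq> D'" "prime_theory E D'" "\<tau> \<notin> D'"
    by (rule prime_theory_extension)
  then show ?thesis using that unfolding \<tau>_def by (auto split: if_splits)
qed

lemma truth_set_eq_imp_derivable_Iff:
  assumes "truth_set E a = truth_set E b"
  shows "derivable E (Iff a b)"
proof -
  have "derivable E (Imp a b)" if "truth_set E a = truth_set E b" for a b
  proof (rule ccontr)
    assume "\<not> derivable E (Imp a b)"
    then have "\<not> derivable_from E {a} b"
      using derivable_Imp_of_derivable_from_singleton by blast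
    then obtain D where "a \<in> D" "prime_theory E D" "b \<notin> D"
      by (auto elim: prime_theory_extension)
    then have "(D, Bot) \<in> truth_set E a - truth_set E b"
      unfolding truth_set_def canon_W_def by auto
    with that show False by simp
  qed
  from this[OF assms] this[OF assms[symmetric]] show ?thesis by (rule derivable_Iff_intro)
qed

lemma canon_R_truth_set:
  assumes "x \<in> canon_W E"
  shows "canon_R E (truth_set E a) x y \<longleftrightarrow> canon_access a x y"
proof -
  have D: "prime_theory E (fst x)" using assms by (simp add: canon_W_def)
  have "canon_access a x y \<longleftrightarrow> canon_access b x y" if "truth_set E a = truth_set E b" for b
    using prime_theory_Iff[OF D derivable.RA_box] prime_theory_Iff[OF D derivable.RA_dia]
      truth_set_eq_imp_derivable_Iff[OF that]
    unfolding canon_access_def by simp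
  then show ?thesis unfolding canon_R_def by blast
qed

lemma canon_Imp_iff:
  assumes "x \<in> canon_W E"
  shows "(\<forall>w\<in>canon_W E. canon_le x w \<longrightarrow> a \<in> fst w \<longrightarrow> b \<in> fst w) \<longleftrightarrow> Imp a b \<in> fst x"
proof
  have D: "prime_theory E (fst x)" using assms by (simp add: canon_W_def)
  assume all: "\<forall>w\<in>canon_W E. canon_le x w \<longrightarrow> a \<in> fst w \<longrightarrow> b \<in> fst w"
  show "Imp a b \<in> fst x"
  proof (rule ccontr)
    assume "Imp a b \<notin> fst x"
    then obtain D' where "fst x \<subseteq> D'" "prime_theory E D'" "a \<in> D'" "b \<notin> D'"
      by (rule prime_theory_Imp_witness[OF D])
    moreover from this have "(D', Bot) \<in> canon_W E" "canon_le x (D', Bot)"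
      by (simp_all add: canon_W_def canon_le_def)
    ultimately show False using all by auto
  qed
next
  assume "Imp a b \<in> fst x"
  then show "\<forall>w\<in>canon_W E. canon_le x w \<longrightarrow> a \<in> fst w \<longrightarrow> b \<in> fst w"
    using prime_theory_mp by (auto simp: canon_W_def canon_le_def)
qed

lemma canon_Box_iff:
  assumes "x \<in> canon_W E"
  shows "(\<forall>w\<in>canon_W E. \<forall>v\<in>canon_W E. canon_le x w \<longrightarrow> canon_access a w v \<longrightarrow> b \<in> fst v)
    \<longleftrightarrow> Box a b \<in> fst x"
proof
  have D: "prime_theory E (fst x)" using assms by (simp add: canon_W_def)
  assume all: "\<forall>w\<in>canon_W E. \<forall>v\<in>canon_W E. canon_le x w \<longrightarrow> canon_access a w v \<longrightarrow> b \<in> fst v"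
  show "Box a b \<in> fst x"
  proof (rule ccontr)
    assume "Box a b \<notin> fst x"
    then obtain D' where "{c. Box a c \<in> fst x} \<subseteq> D'" "prime_theory E D'" "b \<notin> D'"
      by (rule prime_theory_Box_witness[OF D])
    \<comment> \<open>With the tag Bot, the second clause of canon_access holds trivially.\<close>
    have "(fst x, Bot) \<in> canon_W E" "(D', Bot) \<in> canon_W E" "canon_le x (fst x, Bot)"
      using D \<open>prime_theory E D'\<close> by (simp_all add: canon_W_def canon_le_def)
    moreover have "canon_access a (fst x, Bot) (D', Bot)"
      using \<open>{c. Box a c \<in> fst x} \<subseteq> D'\<close> prime_theory_Bot[OF \<open>prime_theory E D'\<close>]
      by (auto simp: canon_access_def)
    ultimately have "b \<in> fst (D', Bot)" using all by blast
    with \<open>b \<notin> D'\<close> show False by simp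
  qed
qed (auto simp: canon_le_def canon_access_def)

lemma canon_Dia_iff:
  assumes "x \<in> canon_W E"
  shows "(\<forall>w\<in>canon_W E. canon_le x w \<longrightarrow> (\<exists>v\<in>canon_W E. canon_access a w v \<and> b \<in> fst v))
    \<longleftrightarrow> Dia a b \<in> fst x"
proof
  assume "\<forall>w\<in>canon_W E. canon_le x w \<longrightarrow> (\<exists>v\<in>canon_W E. canon_access a w v \<and> b \<in> fst v)"
  moreover have "(fst x, b) \<in> canon_W E" using assms by (simp add: canon_W_def)
  ultimately obtain v where "canon_access a (fst x, b) v" "b \<in> fst v"
    by (auto simp: canon_le_def)
  then show "Dia a b \<in> fst x" by (auto simp: canon_access_def)
next
  assume Dia_in: "Dia a b \<in> fst x"
  show "\<forall>w\<in>canon_W E. canon_le x w \<longrightarrow> (\<exists>v\<in>canon_W E. canon_access a w v \<and> b \<in> fst v)"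
  proof (intro ballI impI)
    fix w assume "w \<in> canon_W E" "canon_le x w"
    then have "prime_theory E (fst w)" and "Dia a b \<in> fst w"
      using Dia_in by (auto simp: canon_W_def canon_le_def)
    then obtain D' where "{c. Box a c \<in> fst w} \<subseteq> D'" "prime_theory E D'" "b \<in> D'"
        "Dia a (snd w) \<notin> fst w \<longrightarrow> snd w \<notin> D'"
      by (rule prime_theory_Dia_witness[where t = "snd w"])
    then have "(D', Bot) \<in> canon_W E" "canon_access a w (D', Bot)" "b \<in> fst (D', Bot)"
      by (auto simp: canon_W_def canon_access_def)
    then show "\<exists>v\<in>canon_W E. canon_access a w v \<and> b \<in> fst v" by blast
  qed
qed

lemma canon_truth:
  "x \<in> canon_W E \<Longrightarrow> sat (canon_W E) canon_le (canon_R E) canon_V x a \<longleftrightarrow> a \<in> fst x"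
proof (induction a arbitrary: x)
  case (Atom p)
  then show ?case by (simp add: canon_V_def)
next
  case Bot
  then show ?case using prime_theory_Bot by (auto simp: canon_W_def)
next
  case (And a b)
  then show ?case using prime_theory_And_iff by (auto simp: canon_W_def)
next
  case (Or a b)
  then show ?case using prime_theory_Or_iff by (auto simp: canon_W_def)
next
  case (Imp a b)
  have "sat (canon_W E) canon_le (canon_R E) canon_V x (Imp a b) \<longleftrightarrow>
      (\<forall>w\<in>canon_W E. canon_le x w \<longrightarrow> a \<in> fst w \<longrightarrow> b \<in> fst w)"
    using Imp.IH by simp
  also have "\<dots> \<longleftrightarrow> Imp a b \<in> fst x" by (rule canon_Imp_iff[OF Imp.prems])
  finally show ?case .
next
  case (Box a b)
  have "{u \<in> canon_W E. sat (canon_W E) canon_le (canon_R E) canon_V u a} = truth_set E a"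
    using Box.IH(1) by (auto simp: truth_set_def)
  then have "sat (canon_W E) canon_le (canon_R E) canon_V x (Box a b) \<longleftrightarrow>
      (\<forall>w\<in>canon_W E. \<forall>v\<in>canon_W E. canon_le x w \<longrightarrow> canon_access a w v \<longrightarrow> b \<in> fst v)"
    using canon_R_truth_set Box.IH(2) by simp
  also have "\<dots> \<longleftrightarrow> Box a b \<in> fst x" by (rule canon_Box_iff[OF Box.prems])
  finally show ?case .
next
  case (Dia a b)
  have "{u \<in> canon_W E. sat (canon_W E) canon_le (canon_R E) canon_V u a} = truth_set E a"
    using Dia.IH(1) by (auto simp: truth_set_def)
  then have "sat (canon_W E) canon_le (canon_R E) canon_V x (Dia a b) \<longleftrightarrow>
      (\<forall>w\<in>canon_W E. canon_le x w \<longrightarrow> (\<exists>v\<in>canon_W E. canon_access a w v \<and> b \<in> fst v))"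
    using canon_R_truth_set Dia.IH(2) by simp
  also have "\<dots> \<longleftrightarrow> Dia a b \<in> fst x" by (rule canon_Dia_iff[OF Dia.prems])
  finally show ?case .
qed

lemma chellas_model_canon: "canon_W E \<noteq> {} \<Longrightarrow> chellas_model (canon_W E) canon_le canon_V"
  unfolding chellas_model_def canon_le_def canon_V_def by auto

lemma prop_id_canon:
  assumes "ID_ax \<subseteq> E"
  shows "prop_id (canon_W E) (canon_R E)"
  unfolding prop_id_def
proof (intro allI impI ballI)
  fix X x y assume "x \<in> canon_W E" "y \<in> canon_W E" "canon_R E X x y"
  show "y \<in> X"
  proof (cases "\<exists>a. X = truth_set E a")
    case True
    then obtain a where X: "X = truth_set E a" by blast
    with \<open>canon_R E X x y\<close> \<open>x \<in> canon_W E\<close> have "canon_access a x y"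
      by (simp add: canon_R_truth_set)
    moreover have "Box a a \<in> fst x"
      using \<open>x \<in> canon_W E\<close> assms prime_theory_derivable_mem derivable.ax_extra
      unfolding canon_W_def ID_ax_def by blast
    ultimately show ?thesis
      using X \<open>y \<in> canon_W E\<close> by (simp add: canon_access_def truth_set_def)
  next
    case False
    with \<open>canon_R E X x y\<close> show ?thesis by (auto simp: canon_R_def)
  qed
qed

lemma prop_mp_canon:
  assumes "MP_ax \<subseteq> E"
  shows "prop_mp (canon_W E) (canon_R E)"
  unfolding prop_mp_def
proof (intro allI impI ballI)
  fix X x assume "x \<in> canon_W E" "x \<in> X"
  then have D: "prime_theory E (fst x)" by (simp add: canon_W_def)
  have MP_in: "e \<in> fst x" if "e \<in> MP_ax" for e
    using prime_theory_derivable_mem[OF D derivable.ax_extra] assms that by blast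
  show "canon_R E X x x"
  proof (cases "\<exists>a. X = truth_set E a")
    case True
    then obtain a where X: "X = truth_set E a" by blast
    with \<open>x \<in> X\<close> have "a \<in> fst x" by (simp add: truth_set_def)
    have "b \<in> fst x" if "Box a b \<in> fst x" for b
      using prime_theory_mp[OF D prime_theory_mp[OF D _ that] \<open>a \<in> fst x\<close>] MP_in
      unfolding MP_ax_def by blast
    moreover have "Dia a (snd x) \<in> fst x" if "snd x \<in> fst x"
      using prime_theory_mp[OF D _ prime_theory_And_iff[OF D, THEN iffD2]] MP_in
        \<open>a \<in> fst x\<close> that
      unfolding MP_ax_def by blast
    ultimately have "canon_access a x x" unfolding canon_access_def by blast
    with X \<open>x \<in> canon_W E\<close> show ?thesis by (simp add: canon_R_truth_set)
  next
    case False
    with \<open>x \<in> X\<close> show ?thesis by (simp add: canon_R_def)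
  qed
qed

abbreviation image_le :: "('v \<Rightarrow> 'u) \<Rightarrow> ('v \<Rightarrow> 'v \<Rightarrow> bool) \<Rightarrow> 'u \<Rightarrow> 'u \<Rightarrow> bool" where
  "image_le f le \<equiv> \<lambda>x y. le (inv f x) (inv f y)"

abbreviation image_R ::
  "('v \<Rightarrow> 'u) \<Rightarrow> ('v set \<Rightarrow> 'v \<Rightarrow> 'v \<Rightarrow> bool) \<Rightarrow> 'u set \<Rightarrow> 'u \<Rightarrow> 'u \<Rightarrow> bool" where
  "image_R f R \<equiv> \<lambda>X x y. R (f -` X) (inv f x) (inv f y)"

abbreviation image_V :: "('v \<Rightarrow> 'u) \<Rightarrow> ('v \<Rightarrow> nat set) \<Rightarrow> 'u \<Rightarrow> nat set" where
  "image_V f V \<equiv> \<lambda>x. V (inv f x)"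

lemma sat_image:
  assumes f: "inj f"
  shows "w \<in> W \<Longrightarrow>
    sat (f ` W) (image_le f le) (image_R f R) (image_V f V) (f w) a \<longleftrightarrow> sat W le R V w a"
proof (induction a arbitrary: w)
  case (Box a b)
  have "f -` {u \<in> f ` W. sat (f ` W) (image_le f le) (image_R f R) (image_V f V) u a} =
      {u \<in> W. sat W le R V u a}"
    using Box.IH(1) f by (auto simp: inj_image_mem_iff)
  then show ?case using f Box.IH(2) by simp
next
  case (Dia a b)
  have "f -` {u \<in> f ` W. sat (f ` W) (image_le f le) (image_R f R) (image_V f V) u a} =
      {u \<in> W. sat W le R V u a}"
    using Dia.IH(1) f by (auto simp: inj_image_mem_iff)
  then show ?case using f Dia.IH(2) by simp
qed (use f in auto)

lemma chellas_model_image: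
  assumes f: "inj f" and m: "chellas_model W le V"
  shows "chellas_model (f ` W) (image_le f le) (image_V f V)"
  unfolding chellas_model_def
proof (intro conjI ballI impI)
  show "f ` W \<noteq> {}" using m by (simp add: chellas_model_def)
next
  fix x assume "x \<in> f ` W"
  then obtain u where "u \<in> W" "x = f u" by blast
  then show "le (inv f x) (inv f x)" using chellas_model_refl[OF m] f by simp
next
  fix x y z assume "x \<in> f ` W" "y \<in> f ` W" "z \<in> f ` W"
    and "le (inv f x) (inv f y)" "le (inv f y) (inv f z)"
  moreover from this(1-3) obtain u v w where "u \<in> W" "x = f u" "v \<in> W" "y = f v" "w \<in> W" "z = f w"
    by blast
  ultimately show "le (inv f x) (inv f z)" using chellas_model_trans[OF m, of u v w] f by simp
next
  fix x y assume "x \<in> f ` W" "y \<in> f ` W" and "le (inv f x) (inv f y)"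
  moreover from this(1,2) obtain u v where "u \<in> W" "x = f u" "v \<in> W" "y = f v" by blast
  ultimately show "V (inv f x) \<subseteq> V (inv f y)" using chellas_model_mono[OF m, of u v] f by simp
qed

lemma inj_vimage_subset:
  assumes "inj f" and "X \<subseteq> f ` W"
  shows "f -` X \<subseteq> W"
proof
  fix z assume "z \<in> f -` X"
  with \<open>X \<subseteq> f ` W\<close> have "f z \<in> f ` W" by auto
  with \<open>inj f\<close> show "z \<in> W" by (simp add: inj_image_mem_iff)
qed

lemma prop_id_image:
  assumes f: "inj f" and "prop_id W R"
  shows "prop_id (f ` W) (image_R f R)"
  unfolding prop_id_def
proof (intro allI impI ballI)
  fix X x y assume "X \<subseteq> f ` W" "x \<in> f ` W" "y \<in> f ` W" "R (f -` X) (inv f x) (inv f y)"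
  moreover from this(2,3) obtain u v where "x = f u" "y = f v" "u \<in> W" "v \<in> W" by blast
  moreover have "f -` X \<subseteq> W" using inj_vimage_subset[OF f \<open>X \<subseteq> f ` W\<close>] .
  moreover have "\<forall>w\<in>W. \<forall>v\<in>W. R (f -` X) w v \<longrightarrow> v \<in> f -` X"
    using \<open>prop_id W R\<close> \<open>f -` X \<subseteq> W\<close> unfolding prop_id_def by blast
  ultimately show "y \<in> X" using f by simp
qed

lemma prop_mp_image:
  assumes f: "inj f" and "prop_mp W R"
  shows "prop_mp (f ` W) (image_R f R)"
  unfolding prop_mp_def
proof (intro allI impI ballI)
  fix X x assume "X \<subseteq> f ` W" "x \<in> f ` W" "x \<in> X"
  moreover from this(2) obtain u where "x = f u" "u \<in> W" by blast
  moreover have "f -` X \<subseteq> W" using inj_vimage_subset[OF f \<open>X \<subseteq> f ` W\<close>] .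
  moreover have "\<forall>w\<in>W. w \<in> f -` X \<longrightarrow> R (f -` X) w w"
    using \<open>prop_mp W R\<close> \<open>f -` X \<subseteq> W\<close> unfolding prop_mp_def by blast
  ultimately show "R (f -` X) (inv f x) (inv f x)" using f by simp
qed

(* The tag is recovered as the only diamond-arrow formula of the code. *)
definition world_code :: "form set \<times> form \<Rightarrow> form set set" where
  "world_code x = {insert (Dia (snd x) (snd x)) (Imp (snd x) ` fst x)}"

lemma inj_world_code: "inj world_code"
proof (rule injI)
  fix x y assume "world_code x = world_code y"
  then have codes: "insert (Dia (snd x) (snd x)) (Imp (snd x) ` fst x) =
      insert (Dia (snd y) (snd y)) (Imp (snd y) ` fst y)"
    by (simp add: world_code_def)
  then have "snd x = snd y" by blast
  moreover have "Imp (snd x) ` fst x = Imp (snd x) ` fst y"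
  proof -
    have "Imp (snd x) ` fst x = insert (Dia (snd x) (snd x)) (Imp (snd x) ` fst x) - {Dia (snd x) (snd x)}"
      by auto
    also have "\<dots> = Imp (snd x) ` fst y - {Dia (snd x) (snd x)}"
      using codes \<open>snd x = snd y\<close> by simp
    also have "\<dots> = Imp (snd x) ` fst y" by auto
    finally show ?thesis .
  qed
  then have "fst x = fst y" by (simp add: inj_image_eq_iff inj_def)
  ultimately show "x = y" by (simp add: prod_eq_iff)
qed

lemma derivable_of_valid_class:
  assumes valid: "valid_class TYPE(form set set) P a"
    and P: "P (world_code ` canon_W E) (image_R world_code (canon_R E))"
  shows "derivable E a"
proof (rule ccontr)
  assume "\<not> derivable E a"
  then have "\<not> derivable_from E {} a" by (simp add: derivable_from_empty_iff)
  then obtain D where "prime_theory E D" "a \<notin> D"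
    by (auto elim: prime_theory_extension)
  then have x: "(D, Bot) \<in> canon_W E" by (simp add: canon_W_def)
  then have "chellas_model (canon_W E) canon_le canon_V"
    by (intro chellas_model_canon) blast
  with valid P have "valid_in (world_code ` canon_W E) (image_le world_code canon_le)
      (image_R world_code (canon_R E)) (image_V world_code canon_V) a"
    unfolding valid_class_def using chellas_model_image[OF inj_world_code] by blast
  then have "sat (canon_W E) canon_le (canon_R E) canon_V (D, Bot) a"
    using x sat_image[OF inj_world_code x] unfolding valid_in_def by blast
  with x \<open>a \<notin> D\<close> show False by (simp add: canon_truth)
qed

theorem theorem12:
  fixes a :: form
  shows
   "(ConstCKID a \<longrightarrow> valid_class TYPE('w) prop_id a) \<and>
    (valid_class TYPE(form set set) prop_id a \<longrightarrow> ConstCKID a) \<and>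
    (ConstCKMP a \<longrightarrow> valid_class TYPE('w) prop_mp a) \<and>
    (valid_class TYPE(form set set) prop_mp a \<longrightarrow> ConstCKMP a) \<and>
    (ConstCKMPID a \<longrightarrow> valid_class TYPE('w) (\<lambda>W R. prop_id W R \<and> prop_mp W R) a) \<and>
    (valid_class TYPE(form set set) (\<lambda>W R. prop_id W R \<and> prop_mp W R) a \<longrightarrow> ConstCKMPID a)"
proof (intro conjI impI)
  show "valid_class TYPE('w) prop_id a" if "ConstCKID a"
    using that by (rule valid_class_derivable) (auto intro: valid_ID_ax)
  show "valid_class TYPE('w) prop_mp a" if "ConstCKMP a"
    using that by (rule valid_class_derivable) (auto intro: valid_MP_ax)
  show "valid_class TYPE('w) (\<lambda>W R. prop_id W R \<and> prop_mp W R) a" if "ConstCKMPID a"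
    using that by (rule valid_class_derivable) (auto intro: valid_ID_ax valid_MP_ax)
  show "ConstCKID a" if "valid_class TYPE(form set set) prop_id a"
    using that by (rule derivable_of_valid_class)
      (intro prop_id_image[OF inj_world_code] prop_id_canon; simp)
  show "ConstCKMP a" if "valid_class TYPE(form set set) prop_mp a"
    using that by (rule derivable_of_valid_class)
      (intro prop_mp_image[OF inj_world_code] prop_mp_canon; simp)
  show "ConstCKMPID a"
    if "valid_class TYPE(form set set) (\<lambda>W R. prop_id W R \<and> prop_mp W R) a"
    using that by (rule derivable_of_valid_class)
      (intro conjI prop_id_image[OF inj_world_code] prop_mp_image[OF inj_world_code]
        prop_id_canon prop_mp_canon; simp)
qed

end
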